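(* Fix $\gamma\in(0,1]$, $0<\alpha<0.25$, $r\in\mathbb N$, $\epsilon>0$, and let $\xi>0$ be arbitrarily small. There exist $C>0$ and $N_0$ such that for all $N\ge N_0$ and all $s\in\mathcal S$ with $\|s-s^*\|^{2r}\le N^{-\epsilon}$, $$\Big|[J^{T}(s^* )]^{-1}(s-s^* )\cdot\big\langle s-s^*,\nabla^2 f(s^* )(s-s^* )\big\rangle\Big|\le \frac{C}{N^{\frac{3\epsilon}{2r}-2\alpha-3\xi}}.$$
   Context: Let $N\ge1$, $\lambda=1-\gamma/N^\alpha$, and $b=b(N)\ge1$ an integer with $b=O(\log N)$. $\mathcal S=\{s\in\mathbb R^b:1\ge s_1\ge\cdots\ge s_b\ge0\}$. The mean-field vector field is $f_k(s)=\lambda(s_{k-1}^2-s_k^2)-(s_k-s_{k+1})$, $k=1,\dots,b$, with $s_0=1,s_{b+1}=0$; $s^*$ is its unique equilibrium in $\mathcal S$. $J(s^* )$ is the $b\times b$ tridiagonal Jacobian of $f$ at $s^*$ with $J_{kk}=-2\lambda s^*_k-1$, $J_{k,k+1}=1$, $J_{k+1,k}=2\lambda s^*_k$. For $x\in\mathbb R^b$, $\langle x,\nabla^2f(s^* )x\rangle$ denotes the vector in $\mathbb R^b$ whose $i$-th entry is $x^T\nabla^2 f_i(s^* )x$, where $\nabla^2f_i$ is the Hessian of $f_i$ (its only nonzero entries are $(i,i)$ equal to $-2\lambda$ and $(i-1,i-1)$ equal to $2\lambda$). "$\cdot$" is the Euclidean inner product and $\|\cdot\|$ the Euclidean norm.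 *)

theory Defs
  imports "HOL-Analysis.Analysis" "HOL-Library.Landau_Symbols"
begin

text \<open>Vectors in R^b are represented as functions nat => real, with coordinates
  indexed by 1..b and all other values equal to 0.\<close>

definition lam :: "real \<Rightarrow> real \<Rightarrow> nat \<Rightarrow> real" where
  "lam \<gamma> \<alpha> N = 1 - \<gamma> / (real N powr \<alpha>)"

definition Sset :: "nat \<Rightarrow> (nat \<Rightarrow> real) set" where
  "Sset b = {s. (\<forall>k. k \<notin> {1..b} \<longrightarrow> s k = 0) \<and> s 1 \<le> 1 \<and> 0 \<le> s b
               \<and> (\<forall>k. 1 \<le> k \<and> k < b \<longrightarrow> s (Suc k) \<le> s k)}"

definition sext :: "nat \<Rightarrow> (nat \<Rightarrow> real) \<Rightarrow> nat \<Rightarrow> real" where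
  "sext b s k = (if k = 0 then 1 else if k \<le> b then s k else 0)"

definition fvec :: "real \<Rightarrow> nat \<Rightarrow> (nat \<Rightarrow> real) \<Rightarrow> nat \<Rightarrow> real" where
  "fvec l b s k = l * ((sext b s (k - 1))\<^sup>2 - (sext b s k)\<^sup>2) - (sext b s k - sext b s (Suc k))"

definition equilibrium :: "real \<Rightarrow> nat \<Rightarrow> (nat \<Rightarrow> real) \<Rightarrow> bool" where
  "equilibrium l b s \<longleftrightarrow> s \<in> Sset b \<and> (\<forall>k\<in>{1..b}. fvec l b s k = 0)"

definition sstar :: "real \<Rightarrow> nat \<Rightarrow> nat \<Rightarrow> real" where
  "sstar l b = (THE s. equilibrium l b s)"

definition Jac :: "real \<Rightarrow> nat \<Rightarrow> nat \<Rightarrow> nat \<Rightarrow> real" where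
  "Jac l b i j =
     (if i \<in> {1..b} \<and> j \<in> {1..b} then
        (if i = j then - 2 * l * sstar l b i - 1
         else if j = Suc i then 1
         else if i = Suc j then 2 * l * sstar l b j
         else 0)
      else 0)"

definition invJT :: "real \<Rightarrow> nat \<Rightarrow> (nat \<Rightarrow> real) \<Rightarrow> nat \<Rightarrow> real" where
  "invJT l b x = (THE y. (\<forall>k. k \<notin> {1..b} \<longrightarrow> y k = 0) \<and>
        (\<forall>i\<in>{1..b}. (\<Sum>j=1..b. Jac l b j i * y j) = x i))"

definition hess :: "real \<Rightarrow> nat \<Rightarrow> nat \<Rightarrow> nat \<Rightarrow> real" where
  "hess l i j k = (if j = k \<and> j = i then - 2 * l
                   else if j = k \<and> Suc j = i \<and> 1 \<le> j then 2 * l else 0)"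

definition hessform :: "real \<Rightarrow> nat \<Rightarrow> (nat \<Rightarrow> real) \<Rightarrow> nat \<Rightarrow> real" where
  "hessform l b x i = (if i \<in> {1..b} then (\<Sum>j=1..b. \<Sum>k=1..b. x j * hess l i j k * x k) else 0)"

definition dotb :: "nat \<Rightarrow> (nat \<Rightarrow> real) \<Rightarrow> (nat \<Rightarrow> real) \<Rightarrow> real" where
  "dotb b x y = (\<Sum>k=1..b. x k * y k)"

definition normb :: "nat \<Rightarrow> (nat \<Rightarrow> real) \<Rightarrow> real" where
  "normb b x = sqrt (\<Sum>k=1..b. (x k)\<^sup>2)"

end

(*
  The equilibrium equations telescope to s_k = lambda (s_(k-1)^2 - s_b^2), so s* arises by a
  backward recursion from s_b, which is pinned down by s_0 = 1 (monotonicity and the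
  intermediate value theorem); in particular t_k = lambda s*_k satisfies t_k <= t_(k-1)^2.

  With p = 2 lambda s*, minus the transposed Jacobian at s* is the operator
  y |-> (y_i - y_(i-1)) + p_i (y_i - y_(i+1)), which obeys a discrete minimum principle.
  Comparison with an explicit supersolution of size b^2 prod (1 + t_k) <= b^2 / (1 - lambda)
  bounds every entry of [J^T]^(-1) d by |d| b^2 / (1 - lambda). The Hessian form has l1-norm at
  most 4 |d|^2, so the inner product is at most 4 |d|^3 b^2 / (1 - lambda) =
  4 |d|^3 b^2 N^alpha / gamma; the hypotheses give |d|^3 <= N^(-3 eps / 2r), and b = O(log N)
  gives b^2 <= N^(alpha + 3 xi) eventually.
*)
theory Submission
  imports Defs "HOL-Real_Asymp.Real_Asymp"
begin

lemma Sset_antimono: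
  assumes s: "s \<in> Sset b" and "1 \<le> j" "j \<le> k" "k \<le> b"
  shows "s k \<le> s j"
  using assms(3,4)
proof (induction k rule: dec_induct)
  case (step n)
  have "s (Suc n) \<le> s n"
    using s step.hyps(1) step.prems assms(2) unfolding Sset_def by simp
  then show ?case using step by simp
qed simp

lemma Sset_bounds:
  assumes "s \<in> Sset b" "k \<in> {1..b}"
  shows "0 \<le> s k" "s k \<le> 1"
proof -
  have "s b \<le> s k" "s k \<le> s 1" using Sset_antimono[OF assms(1)] assms(2) by auto
  then show "0 \<le> s k" "s k \<le> 1" using assms(1) unfolding Sset_def by auto
qed

lemma Sset_outside: "s \<in> Sset b \<Longrightarrow> k \<notin> {1..b} \<Longrightarrow> s k = 0"
  unfolding Sset_def by blast

lemma equilibrium_iff_recursion: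
  assumes "1 \<le> b"
  shows "equilibrium l b s \<longleftrightarrow> s \<in> Sset b \<and>
    (\<forall>k\<in>{1..b}. sext b s k = l * ((sext b s (k - 1))\<^sup>2 - (s b)\<^sup>2))"
proof -
  define T where "T k = l * ((sext b s (k - 1))\<^sup>2 - (s b)\<^sup>2) - sext b s k" for k
  have last: "fvec l b s b = T b"
    using assms unfolding fvec_def T_def sext_def by simp
  have telescope: "fvec l b s k = T k - T (Suc k)" if "1 \<le> k" "k < b" for k
    using assms that unfolding fvec_def T_def sext_def by (auto simp: algebra_simps)
  have "(\<forall>k\<in>{1..b}. fvec l b s k = 0) \<longleftrightarrow> (\<forall>k\<in>{1..b}. T k = 0)"
  proof
    assume f: "\<forall>k\<in>{1..b}. fvec l b s k = 0"
    show "\<forall>k\<in>{1..b}. T k = 0"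
    proof
      fix k assume k: "k \<in> {1..b}"
      then have "k \<le> b" by simp
      then show "T k = 0"
      proof (induction k rule: inc_induct)
        case base then show ?case using f last assms by auto
      next
        case (step n) then show ?case using f k telescope[of n] by auto
      qed
    qed
  next
    assume T: "\<forall>k\<in>{1..b}. T k = 0"
    show "\<forall>k\<in>{1..b}. fvec l b s k = 0"
    proof
      fix k assume k: "k \<in> {1..b}"
      show "fvec l b s k = 0"
        using T k last telescope[of k] by (cases "k = b") auto
    qed
  qed
  moreover have "sext b s k = l * ((sext b s (k - 1))\<^sup>2 - (s b)\<^sup>2) \<longleftrightarrow> T k = 0" for k
    unfolding T_def by auto
  ultimately show ?thesis
    unfolding equilibrium_def by blast
qed

text \<open>\<open>eq_chain l u m\<close> is the entry \<open>s (b - m)\<close> of the equilibrium with \<open>s b = u\<close>,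
  obtained by solving the telescoped equations backwards.\<close>

fun eq_chain :: "real \<Rightarrow> real \<Rightarrow> nat \<Rightarrow> real" where
  "eq_chain l u 0 = u"
| "eq_chain l u (Suc m) = sqrt (eq_chain l u m / l + u\<^sup>2)"

lemma eq_chain_nonneg: "0 \<le> u \<Longrightarrow> 0 < l \<Longrightarrow> 0 \<le> eq_chain l u m"
  by (induction m) auto

lemma eq_chain_Suc_sq: "0 \<le> u \<Longrightarrow> 0 < l \<Longrightarrow> (eq_chain l u (Suc m))\<^sup>2 = eq_chain l u m / l + u\<^sup>2"
  using eq_chain_nonneg[of u l m] by simp

lemma eq_chain_strict_mono:
  assumes "0 \<le> u" "u < v" "0 < l"
  shows "eq_chain l u m < eq_chain l v m"
proof (induction m)
  case (Suc m)
  have "u\<^sup>2 < v\<^sup>2" using assms by (intro power_strict_mono) auto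
  moreover have "eq_chain l u m / l < eq_chain l v m / l"
    using Suc assms(3) by (simp add: divide_strict_right_mono)
  ultimately show ?case by simp
qed (use assms in simp)

lemma isCont_eq_chain: "0 < l \<Longrightarrow> isCont (\<lambda>u. eq_chain l u m) u"
  by (induction m) (auto intro!: continuous_intros)

lemma eq_chain_zero: "eq_chain l 0 m = 0"
  by (induction m) auto

lemma eq_chain_one_ge: "0 < l \<Longrightarrow> 1 \<le> eq_chain l 1 m"
proof (induction m)
  case (Suc m)
  then have "0 \<le> eq_chain l 1 m / l" by simp
  then show ?case by simp
qed simp

lemma eq_chain_le_Suc:
  assumes "0 \<le> u" "0 < l" "l \<le> 1" and le1: "eq_chain l u (Suc m) \<le> 1"
  shows "eq_chain l u m \<le> eq_chain l u (Suc m)"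
proof -
  let ?c = "eq_chain l u m"
  have c0: "0 \<le> ?c" using eq_chain_nonneg assms by blast
  have "?c \<le> ?c / l" using assms c0 by (simp add: le_divide_eq mult_left_le)
  also have "\<dots> \<le> (eq_chain l u (Suc m))\<^sup>2" using eq_chain_Suc_sq[OF assms(1,2)] by simp
  finally have c_le: "?c \<le> (eq_chain l u (Suc m))\<^sup>2" .
  then have "?c \<le> 1" using le1 eq_chain_nonneg[OF assms(1,2)]
    by (smt (verit) power_le_one)
  then have "?c\<^sup>2 \<le> (eq_chain l u (Suc m))\<^sup>2"
    using c0 c_le by (smt (verit) mult_left_le power2_eq_square)
  then show ?thesis using eq_chain_nonneg[OF assms(1,2)] by (rule power2_le_imp_le)
qed

lemma eq_chain_le_one:
  assumes "0 \<le> u" "0 < l" "l \<le> 1" "eq_chain l u n \<le> 1" "m \<le> n"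
  shows "eq_chain l u m \<le> 1"
  using assms(5)
proof (induction m rule: inc_induct)
  case (step k)
  then show ?case using eq_chain_le_Suc[OF assms(1-3), of k] by linarith
qed (use assms in simp)

lemma equilibrium_eq_chain:
  assumes "1 \<le> b" "0 < l" and eq: "equilibrium l b s" and "k \<le> b"
  shows "sext b s k = eq_chain l (s b) (b - k)"
  using assms(4)
proof (induction k rule: inc_induct)
  case base
  then show ?case using assms(1) by (simp add: sext_def)
next
  case (step n)
  have s: "s \<in> Sset b" and rec: "sext b s (Suc n) = l * ((sext b s n)\<^sup>2 - (s b)\<^sup>2)"
    using eq step.hyps(2) assms(1) unfolding equilibrium_iff_recursion[OF assms(1)] by auto
  have u: "0 \<le> s b" using s assms(1) by (simp add: Sset_bounds)
  have "(sext b s n)\<^sup>2 = eq_chain l (s b) (b - Suc n) / l + (s b)\<^sup>2"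
    using rec step.IH assms(2) by (simp add: field_simps)
  also have "\<dots> = (eq_chain l (s b) (b - n))\<^sup>2"
    using eq_chain_Suc_sq[OF u assms(2), of "b - Suc n"] step.hyps(2) by (simp add: Suc_diff_Suc)
  finally show ?case
    using s eq_chain_nonneg[OF u assms(2)] Sset_bounds(1)[of s b n]
    by (auto simp: sext_def power2_eq_iff_nonneg)
qed

lemma equilibrium_unique:
  assumes "1 \<le> b" "0 < l" "equilibrium l b s" "equilibrium l b s'"
  shows "s = s'"
proof -
  have chain: "sext b s k = eq_chain l (s b) (b - k)" "sext b s' k = eq_chain l (s' b) (b - k)"
    if "k \<le> b" for k
    using equilibrium_eq_chain assms that by blast+
  have u: "0 \<le> s b" "0 \<le> s' b"
    using assms Sset_bounds(1) unfolding equilibrium_def by auto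
  have "eq_chain l (s b) b = eq_chain l (s' b) b"
    using chain[of 0] by (simp add: sext_def)
  then have "s b = s' b"
    using eq_chain_strict_mono[of _ _ l b] u assms(2) by (metis linorder_neq_iff order_less_irrefl)
  then have "s k = s' k" if "k \<in> {1..b}" for k
    using chain[of k] that by (simp add: sext_def)
  moreover have "s k = s' k" if "k \<notin> {1..b}" for k
    using assms(3,4) Sset_outside that unfolding equilibrium_def by metis
  ultimately show ?thesis by blast
qed

lemma equilibrium_exists:
  assumes "1 \<le> b" "0 < l" "l \<le> 1"
  shows "\<exists>s. equilibrium l b s"
proof -
  obtain u where u: "0 \<le> u" "u \<le> 1" "eq_chain l u b = 1"
    using IVT[of "\<lambda>u. eq_chain l u b" 0 1 1] eq_chain_zero eq_chain_one_ge[OF assms(2)]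
      isCont_eq_chain[OF assms(2)] by auto
  define s where "s k = (if k \<in> {1..b} then eq_chain l u (b - k) else 0)" for k
  have sext_s: "sext b s k = eq_chain l u (b - k)" if "k \<le> b" for k
    using that u by (auto simp: sext_def s_def)
  have le1: "eq_chain l u m \<le> 1" if "m \<le> b" for m
    using eq_chain_le_one[OF u(1) assms(2,3), of b] u(3) that by simp
  have "s \<in> Sset b"
    unfolding Sset_def
  proof (intro CollectI conjI allI impI)
    show "s 1 \<le> 1" using le1 by (simp add: s_def)
    show "0 \<le> s b" using u assms by (simp add: s_def)
    fix k
    show "k \<notin> {1..b} \<Longrightarrow> s k = 0" by (auto simp: s_def)
    assume k: "1 \<le> k \<and> k < b"
    then have "b - k = Suc (b - Suc k)" by (simp add: Suc_diff_Suc)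
    then show "s (Suc k) \<le> s k"
      using k eq_chain_le_Suc[OF u(1) assms(2,3)] le1[of "b - k"] by (simp add: s_def)
  qed
  moreover have "sext b s k = l * ((sext b s (k - 1))\<^sup>2 - (s b)\<^sup>2)" if "k \<in> {1..b}" for k
  proof -
    have "b - (k - 1) = Suc (b - k)" using that by (simp add: Suc_diff_le)
    then have "(sext b s (k - 1))\<^sup>2 = sext b s k / l + u\<^sup>2"
      using sext_s that eq_chain_Suc_sq[OF u(1) assms(2)] by simp
    moreover have "s b = u" using assms(1) by (simp add: s_def)
    ultimately show ?thesis using assms(2) by (simp add: field_simps)
  qed
  ultimately show ?thesis
    using equilibrium_iff_recursion[OF assms(1)] by blast
qed

lemma sstar_equilibrium:
  assumes "1 \<le> b" "0 < l" "l \<le> 1"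
  shows "equilibrium l b (sstar l b)"
  unfolding sstar_def
  using equilibrium_exists[OF assms] equilibrium_unique[OF assms(1,2)] by (metis theI)

text \<open>For \<open>p = 2 * l * sstar l b\<close> this is minus the transposed Jacobian \<open>Jac l b\<close>, see \<open>sum_Jac_transpose\<close>.\<close>

definition diff_op :: "(nat \<Rightarrow> real) \<Rightarrow> (nat \<Rightarrow> real) \<Rightarrow> nat \<Rightarrow> real" where
  "diff_op p z i = (z i - z (i - 1)) + p i * (z i - z (Suc i))"

lemma diff_op_diff: "diff_op p (\<lambda>i. w i - y i) i = diff_op p w i - diff_op p y i"
  unfolding diff_op_def by (simp add: algebra_simps)

lemma diff_op_cmult: "diff_op p (\<lambda>i. c * w i) i = c * diff_op p w i"
  unfolding diff_op_def by (simp add: algebra_simps)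

lemma diff_op_minimum_principle:
  assumes p: "\<forall>i\<in>{1..b}. 0 \<le> p i" and bdry: "0 \<le> z 0" "0 \<le> z (Suc b)"
    and op: "\<forall>i\<in>{1..b}. 0 \<le> diff_op p z i" and i: "i \<in> {1..b}"
  shows "0 \<le> z i"
proof (rule ccontr)
  assume neg: "\<not> 0 \<le> z i"
  define \<mu> where "\<mu> = Min (z ` {1..b})"
  have "\<mu> \<in> z ` {1..b}" unfolding \<mu>_def using i by (intro Min_in) auto
  then obtain j where j: "j \<in> {1..b}" "z j = \<mu>" by auto
  have min: "\<mu> \<le> z k" if "k \<in> {1..b}" for k unfolding \<mu>_def using that by simp
  have "\<mu> < 0" using min[OF i] neg by simp
  define m where "m = (LEAST k. k \<in> {1..b} \<and> z k = \<mu>)"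
  have m: "m \<in> {1..b}" "z m = \<mu>" and m_least: "\<And>k. k \<in> {1..b} \<Longrightarrow> z k = \<mu> \<Longrightarrow> m \<le> k"
    unfolding m_def using j by (metis (mono_tags, lifting) LeastI Least_le)+
  have left: "z m < z (m - 1)"
  proof (cases "m = 1")
    case True then show ?thesis using bdry \<open>\<mu> < 0\<close> m by simp
  next
    case False
    then have "m - 1 \<in> {1..b}" using m by auto
    moreover have "z (m - 1) \<noteq> \<mu>" using m_least[of "m - 1"] m False by fastforce
    ultimately show ?thesis using min m by fastforce
  qed
  have right: "z m \<le> z (Suc m)"
    using bdry \<open>\<mu> < 0\<close> m min[of "Suc m"] by (cases "m = b") auto
  have "p m * (z m - z (Suc m)) \<le> 0" using p m right by (simp add: mult_nonneg_nonpos)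
  then have "diff_op p z m < 0" unfolding diff_op_def using left by linarith
  then show False using op m by force
qed

lemma diff_op_comparison:
  assumes p: "\<forall>i\<in>{1..b}. 0 \<le> p i"
    and bdry: "y 0 \<le> w 0" "y (Suc b) \<le> w (Suc b)"
    and op: "\<forall>i\<in>{1..b}. diff_op p y i \<le> diff_op p w i" and i: "i \<in> {1..b}"
  shows "y i \<le> w i"
  using diff_op_minimum_principle[OF p _ _ _ i, of "\<lambda>i. w i - y i"] bdry op
  by (simp add: diff_op_diff)

lemma diff_op_solution_unique:
  assumes p: "\<forall>i\<in>{1..b}. 0 \<le> p i"
    and y: "\<forall>k. k \<notin> {1..b} \<longrightarrow> y k = 0" "\<forall>i\<in>{1..b}. diff_op p y i = x i"
    and y': "\<forall>k. k \<notin> {1..b} \<longrightarrow> y' k = 0" "\<forall>i\<in>{1..b}. diff_op p y' i = x i"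
  shows "y = y'"
proof
  fix k
  show "y k = y' k"
  proof (cases "k \<in> {1..b}")
    case True
    then show ?thesis
      using diff_op_comparison[OF p, of y y'] diff_op_comparison[OF p, of y' y] y y' by force
  qed (use y y' in auto)
qed

lemma diff_op_solution_bound:
  assumes p: "\<forall>i\<in>{1..b}. 0 \<le> p i"
    and y: "y 0 = 0" "y (Suc b) = 0" "\<forall>i\<in>{1..b}. diff_op p y i = x i"
    and w: "0 \<le> w 0" "0 \<le> w (Suc b)" "\<forall>i\<in>{1..b}. 1 \<le> diff_op p w i"
    and X: "0 \<le> X" "\<forall>i\<in>{1..b}. \<bar>x i\<bar> \<le> X" and i: "i \<in> {1..b}"
  shows "\<bar>y i\<bar> \<le> X * w i"
proof -
  have Xw: "\<bar>x i\<bar> \<le> X * diff_op p w i" if "i \<in> {1..b}" for i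
  proof -
    have "X * 1 \<le> X * diff_op p w i" using w(3) X(1) that by (intro mult_left_mono) auto
    moreover have "\<bar>x i\<bar> \<le> X" using X(2) that by blast
    ultimately show ?thesis by simp
  qed
  have bdry: "0 \<le> X * w 0" "0 \<le> X * w (Suc b)" using w X(1) by simp_all
  have "y i \<le> X * w i"
  proof (rule diff_op_comparison[OF p _ _ _ i])
    show "\<forall>i\<in>{1..b}. diff_op p y i \<le> diff_op p (\<lambda>i. X * w i) i"
      unfolding diff_op_cmult using y(3) Xw by (force simp: abs_le_iff)
  qed (use y bdry in auto)
  moreover have "- 1 * y i \<le> X * w i"
  proof (rule diff_op_comparison[OF p _ _ _ i])
    show "\<forall>i\<in>{1..b}. diff_op p (\<lambda>i. - 1 * y i) i \<le> diff_op p (\<lambda>i. X * w i) i"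
      unfolding diff_op_cmult using y(3) Xw by (force simp: abs_le_iff)
  qed (use y bdry in auto)
  ultimately show ?thesis by (simp add: abs_le_iff)
qed

text \<open>Shooting from the right end: \<open>shoot p x b t m\<close> is the value at \<open>b + 1 - m\<close> of the
  solution of \<open>diff_op p y = x\<close> with \<open>y (b + 1) = 0\<close> and \<open>y b = t\<close>.\<close>

fun shoot :: "(nat \<Rightarrow> real) \<Rightarrow> (nat \<Rightarrow> real) \<Rightarrow> nat \<Rightarrow> real \<Rightarrow> nat \<Rightarrow> real" where
  "shoot p x b t 0 = 0"
| "shoot p x b t (Suc 0) = t"
| "shoot p x b t (Suc (Suc m)) =
     shoot p x b t (Suc m) + p (b - m) * (shoot p x b t (Suc m) - shoot p x b t m) - x (b - m)"

lemma shoot_linear: "shoot p x b t m = shoot p x b 0 m + t * shoot p (\<lambda>_. 0) b 1 m"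
  by (induction p x b t m rule: shoot.induct) (simp_all add: algebra_simps)

lemma shoot_homogeneous_ge_one:
  assumes p: "\<forall>k\<in>{1..b}. 0 \<le> p k" and "m \<le> b"
  shows "1 \<le> shoot p (\<lambda>_. 0) b 1 (Suc m) \<and> shoot p (\<lambda>_. 0) b 1 m \<le> shoot p (\<lambda>_. 0) b 1 (Suc m)"
  using assms(2)
proof (induction m)
  case (Suc m)
  let ?h = "shoot p (\<lambda>_. 0) b 1"
  have "?h (Suc (Suc m)) - ?h (Suc m) = p (b - m) * (?h (Suc m) - ?h m)"
    by simp
  moreover have "0 \<le> p (b - m) * (?h (Suc m) - ?h m)" using Suc p by simp
  ultimately show ?case using Suc by linarith
qed simp

lemma diff_op_solvable:
  assumes p: "\<forall>k\<in>{1..b}. 0 \<le> p k"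
  shows "\<exists>y. (\<forall>k. k \<notin> {1..b} \<longrightarrow> y k = 0) \<and> (\<forall>i\<in>{1..b}. diff_op p y i = x i)"
proof -
  let ?h = "shoot p (\<lambda>_. 0) b 1"
  have h: "1 \<le> ?h (Suc b)" using shoot_homogeneous_ge_one[OF p, of b] by simp
  define t where "t = - shoot p x b 0 (Suc b) / ?h (Suc b)"
  have end0: "shoot p x b t (Suc b) = 0" using h unfolding t_def by (subst shoot_linear) simp
  define y where "y i = (if i \<le> Suc b then shoot p x b t (Suc b - i) else 0)" for i
  have "y k = 0" if "k \<notin> {1..b}" for k
    using that end0 unfolding y_def by (cases "k = 0") auto
  moreover have "diff_op p y i = x i" if i: "i \<in> {1..b}" for i
  proof -
    define m where "m = b - i"
    have "Suc b - (i - 1) = Suc (Suc m)" "Suc b - i = Suc m" "Suc b - Suc i = m" "b - m = i"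
      using i unfolding m_def by auto
    then have "y (i - 1) = shoot p x b t (Suc (Suc m))" "y i = shoot p x b t (Suc m)"
      "y (Suc i) = shoot p x b t m"
      using i unfolding y_def by auto
    then show ?thesis using \<open>b - m = i\<close> unfolding diff_op_def by simp
  qed
  ultimately show ?thesis by blast
qed

definition weight :: "(nat \<Rightarrow> real) \<Rightarrow> nat \<Rightarrow> nat \<Rightarrow> real" where
  "weight t b i = (\<Prod>k\<in>{i..b}. 1 + t k)"

text \<open>The increments \<open>D m = (b + 1 - m) * weight t b m\<close> of \<open>supersol\<close> satisfy
  \<open>D i = (1 + t i) * D (i + 1) + weight t b i\<close>, which dominates \<open>2 * t i * D (i + 1) + 1\<close>
  as long as \<open>0 \<le> t i \<le> 1\<close>.\<close>

definition supersol :: "(nat \<Rightarrow> real) \<Rightarrow> nat \<Rightarrow> nat \<Rightarrow> real" where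
  "supersol t b i = (if i \<in> {1..b} then \<Sum>m = 1..i. real (Suc b - m) * weight t b m else 0)"

lemma weight_ge_one: "\<forall>k\<in>{1..b}. 0 \<le> t k \<Longrightarrow> 1 \<le> i \<Longrightarrow> 1 \<le> weight t b i"
  unfolding weight_def by (intro prod_ge_1) auto

lemma weight_le_weight_one:
  assumes t: "\<forall>k\<in>{1..b}. 0 \<le> t k" and "1 \<le> i"
  shows "weight t b i \<le> weight t b 1"
proof (cases "i \<le> b")
  case True
  then have "{1..b} = {1..<i} \<union> {i..b}" using assms(2) by auto
  then have "weight t b 1 = (\<Prod>k\<in>{1..<i}. 1 + t k) * weight t b i"
    unfolding weight_def by (simp add: prod.union_disjoint[symmetric] ivl_disj_int)
  moreover have "1 \<le> (\<Prod>k\<in>{1..<i}. 1 + t k)" using t True by (intro prod_ge_1) auto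
  moreover have "0 \<le> weight t b i" using weight_ge_one[OF t assms(2)] by simp
  ultimately show ?thesis by (simp add: mult_le_cancel_right1)
next
  case False
  then show ?thesis using weight_ge_one[OF t, of 1] by (simp add: weight_def)
qed

lemma supersol_nonneg:
  assumes "\<forall>k\<in>{1..b}. 0 \<le> t k"
  shows "0 \<le> supersol t b i"
proof -
  have "0 \<le> real (Suc b - m) * weight t b m" if "1 \<le> m" for m
    using weight_ge_one[OF assms that] by simp
  then show ?thesis unfolding supersol_def by (auto intro!: sum_nonneg simp del: of_nat_diff)
qed

lemma supersol_le:
  assumes t: "\<forall>k\<in>{1..b}. 0 \<le> t k"
  shows "supersol t b i \<le> real b ^ 2 * weight t b 1"
proof (cases "i \<in> {1..b}")
  case True
  have "supersol t b i = (\<Sum>m = 1..i. real (Suc b - m) * weight t b m)"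
    using True unfolding supersol_def by simp
  also have "\<dots> \<le> (\<Sum>m = 1..i. real b * weight t b 1)"
    using weight_le_weight_one[OF t] weight_ge_one[OF t] order_trans[OF zero_le_one]
    by (intro sum_mono mult_mono) auto
  also have "\<dots> \<le> real b * (real b * weight t b 1)"
    using True weight_ge_one[OF t, of 1] by (simp add: mult_right_mono)
  finally show ?thesis by (simp add: power2_eq_square)
next
  case False
  then have "supersol t b i = 0" unfolding supersol_def by argo
  then show ?thesis using weight_ge_one[OF t, of 1] by simp
qed

lemma diff_op_supersol:
  assumes t: "\<forall>k\<in>{1..b}. 0 \<le> t k \<and> t k \<le> 1" and i: "i \<in> {1..b}"
  shows "1 \<le> diff_op (\<lambda>k. 2 * t k) (supersol t b) i"
proof -
  have t0: "\<forall>k\<in>{1..b}. 0 \<le> t k" using t by blast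
  define D where "D m = real (Suc b - m) * weight t b m" for m
  have S: "supersol t b j = sum D {1..j}" if "j \<le> b" for j
    using that unfolding supersol_def D_def by auto
  have step: "supersol t b (Suc j) - supersol t b j = D (Suc j)" if "Suc j \<le> b" for j
    using that S[of j] S[of "Suc j"] by simp
  have left: "supersol t b i - supersol t b (i - 1) = D i"
    using step[of "i - 1"] i by simp
  show ?thesis
  proof (cases "i = b")
    case True
    have "supersol t b (Suc i) = 0" using True by (simp add: supersol_def)
    then have "0 \<le> 2 * t i * (supersol t b i - supersol t b (Suc i))"
      using t i supersol_nonneg[OF t0, of i] by simp
    moreover have "1 \<le> D i" using True weight_ge_one[OF t0] i by (simp add: D_def)
    ultimately show ?thesis unfolding diff_op_def using left by simp
  next
    case False
    then have i': "Suc i \<in> {1..b}" using i by auto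
    have right: "supersol t b (Suc i) - supersol t b i = D (Suc i)"
      using step i' by simp
    have "D i = (1 + t i) * D (Suc i) + weight t b i"
      using i' by (simp add: D_def weight_def prod.atLeast_Suc_atMost Suc_diff_Suc algebra_simps)
    moreover have "2 * t i * D (Suc i) \<le> (1 + t i) * D (Suc i)"
      using t i weight_ge_one[OF t0, of "Suc i"] unfolding D_def by (intro mult_right_mono) auto
    moreover have "1 \<le> weight t b i" using weight_ge_one[OF t0] i by simp
    ultimately show ?thesis unfolding diff_op_def using left right by (simp add: algebra_simps)
  qed
qed

lemma prod_one_plus_le:
  fixes t :: "nat \<Rightarrow> real"
  assumes t: "\<forall>k\<in>{1..b}. 0 \<le> t k \<and> t k \<le> (t (k - 1))\<^sup>2"
  shows "(1 - (t 0)\<^sup>2) * (\<Prod>k\<in>{1..b}. 1 + t k) \<le> 1 - (t b)\<^sup>2"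
  using t
proof (induction b)
  case (Suc b)
  have tb: "0 \<le> t (Suc b)" "t (Suc b) \<le> (t b)\<^sup>2" using Suc.prems[rule_format, of "Suc b"] by auto
  have "(1 - (t 0)\<^sup>2) * (\<Prod>k\<in>{1..Suc b}. 1 + t k)
        = (1 - (t 0)\<^sup>2) * (\<Prod>k\<in>{1..b}. 1 + t k) * (1 + t (Suc b))"
    by (simp add: prod.nat_ivl_Suc' algebra_simps)
  also have "\<dots> \<le> (1 - (t b)\<^sup>2) * (1 + t (Suc b))"
    using Suc tb by (intro mult_right_mono) auto
  also have "\<dots> \<le> (1 - t (Suc b)) * (1 + t (Suc b))"
    using tb by (intro mult_right_mono) auto
  also have "\<dots> = 1 - (t (Suc b))\<^sup>2" by (simp add: algebra_simps power2_eq_square)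
  finally show ?case .
qed simp

lemma sum_Jac_transpose:
  assumes i: "i \<in> {1..b}" and y: "\<forall>k. k \<notin> {1..b} \<longrightarrow> y k = 0"
  shows "(\<Sum>j = 1..b. Jac l b j i * y j) = - diff_op (\<lambda>k. 2 * l * sstar l b k) y i"
proof -
  let ?s = "sstar l b"
  have "(\<Sum>j = 1..b. Jac l b j i * y j) =
        (\<Sum>j = 1..b. (if j = i then (- 2 * l * ?s i - 1) * y j else 0)
                 + (if j = i - 1 then y j else 0) + (if j = Suc i then 2 * l * ?s i * y j else 0))"
    by (rule sum.cong) (use i in \<open>auto simp: Jac_def\<close>)
  also have "\<dots> = (- 2 * l * ?s i - 1) * y i + y (i - 1) + 2 * l * ?s i * y (Suc i)"
    using i y by (simp add: sum.distrib)
  finally show ?thesis unfolding diff_op_def by (simp add: algebra_simps)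
qed

lemma sstar_bounds:
  assumes "1 \<le> b" "0 < l" "l \<le> 1"
  shows "sstar l b \<in> Sset b" "0 \<le> sstar l b k" "sstar l b k \<le> 1"
proof -
  show S: "sstar l b \<in> Sset b"
    using sstar_equilibrium[OF assms] unfolding equilibrium_def by blast
  show "0 \<le> sstar l b k" "sstar l b k \<le> 1"
    using Sset_bounds[OF S] Sset_outside[OF S] by (cases "k \<in> {1..b}"; simp)+
qed

lemma invJT_eq:
  assumes "1 \<le> b" "0 < l" "l \<le> 1"
    and y: "\<forall>k. k \<notin> {1..b} \<longrightarrow> y k = 0"
    and op: "\<forall>i\<in>{1..b}. diff_op (\<lambda>k. 2 * l * sstar l b k) y i = - x i"
  shows "invJT l b x = y"
  unfolding invJT_def
proof (rule the_equality)
  let ?p = "\<lambda>k. 2 * l * sstar l b k"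
  have p: "\<forall>k\<in>{1..b}. 0 \<le> ?p k" using sstar_bounds[OF assms(1-3)] assms(2) by simp
  show "(\<forall>k. k \<notin> {1..b} \<longrightarrow> y k = 0) \<and> (\<forall>i\<in>{1..b}. (\<Sum>j = 1..b. Jac l b j i * y j) = x i)"
    using y op sum_Jac_transpose[OF _ y] by simp
  fix y'
  assume y': "(\<forall>k. k \<notin> {1..b} \<longrightarrow> y' k = 0) \<and>
    (\<forall>i\<in>{1..b}. (\<Sum>j = 1..b. Jac l b j i * y' j) = x i)"
  then have "\<forall>i\<in>{1..b}. diff_op ?p y' i = - x i"
    using sum_Jac_transpose[of _ b y' l] by fastforce
  then show "y' = y" using diff_op_solution_unique[OF p, of y' "\<lambda>i. - x i" y] y' y op by blast
qed

lemma weight_sstar_le: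
  assumes "1 \<le> b" "0 < l" "l < 1"
  shows "weight (\<lambda>k. l * sstar l b k) b 1 \<le> 1 / (1 - l)"
proof -
  let ?s = "sstar l b"
  define t where "t k = l * sext b ?s k" for k
  have rec: "\<forall>k\<in>{1..b}. sext b ?s k = l * ((sext b ?s (k - 1))\<^sup>2 - (?s b)\<^sup>2)"
    using sstar_equilibrium assms equilibrium_iff_recursion by auto
  have t: "\<forall>k\<in>{1..b}. 0 \<le> t k \<and> t k \<le> (t (k - 1))\<^sup>2"
  proof
    fix k assume k: "k \<in> {1..b}"
    have "sext b ?s k \<le> l * (sext b ?s (k - 1))\<^sup>2"
      using rec k assms(2) by (simp add: right_diff_distrib)
    then have "l * sext b ?s k \<le> l * (l * (sext b ?s (k - 1))\<^sup>2)"
      using assms(2) by (intro mult_left_mono) auto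
    then show "0 \<le> t k \<and> t k \<le> (t (k - 1))\<^sup>2"
      using k assms sstar_bounds(2)[of b l k]
      unfolding t_def by (simp add: sext_def power2_eq_square algebra_simps)
  qed
  have W: "weight (\<lambda>k. l * ?s k) b 1 = (\<Prod>k\<in>{1..b}. 1 + t k)"
    unfolding weight_def t_def sext_def by (intro prod.cong) auto
  have "(1 - l) * weight (\<lambda>k. l * ?s k) b 1 \<le> (1 - l\<^sup>2) * weight (\<lambda>k. l * ?s k) b 1"
    using assms weight_ge_one[of b "\<lambda>k. l * ?s k" 1] sstar_bounds[of b l]
    by (intro mult_right_mono) (auto simp: power2_eq_square)
  also have "\<dots> \<le> 1 - (t b)\<^sup>2"
    using prod_one_plus_le[OF t] W assms(2) by (simp add: t_def sext_def)
  also have "\<dots> \<le> 1" by simp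
  finally show ?thesis using assms(3) by (simp add: field_simps)
qed

lemma normb_nonneg: "0 \<le> normb b x"
  unfolding normb_def by (simp add: sum_nonneg)

lemma abs_le_normb:
  assumes "i \<in> {1..b}"
  shows "\<bar>x i\<bar> \<le> normb b x"
proof -
  have "(x i)\<^sup>2 \<le> (\<Sum>k = 1..b. (x k)\<^sup>2)" using assms by (intro member_le_sum) auto
  then show ?thesis unfolding normb_def by (metis real_sqrt_abs real_sqrt_le_mono)
qed

lemma invJT_abs_le:
  assumes "1 \<le> b" "0 < l" "l < 1" and i: "i \<in> {1..b}"
  shows "\<bar>invJT l b x i\<bar> \<le> normb b x * real b ^ 2 / (1 - l)"
proof -
  let ?t = "\<lambda>k. l * sstar l b k"
  let ?p = "\<lambda>k. 2 * l * sstar l b k"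
  have s: "0 \<le> sstar l b k" "sstar l b k \<le> 1" for k
    using sstar_bounds(2,3)[of b l k] assms(1-3) by simp_all
  have t: "\<forall>k\<in>{1..b}. 0 \<le> ?t k \<and> ?t k \<le> 1"
    using s assms(2,3) by (simp add: mult_le_one)
  have p: "\<forall>k\<in>{1..b}. 0 \<le> ?p k" using s assms(2) by simp
  obtain y where y: "\<forall>k. k \<notin> {1..b} \<longrightarrow> y k = 0" "\<forall>i\<in>{1..b}. diff_op ?p y i = - x i"
    using diff_op_solvable[OF p, of "\<lambda>i. - x i"] by blast
  have w: "\<forall>i\<in>{1..b}. 1 \<le> diff_op ?p (supersol ?t b) i"
    using diff_op_supersol[OF t] by (simp add: mult.assoc)
  have y0: "y 0 = 0" "y (Suc b) = 0" using y(1) by simp_all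
  have x: "\<forall>i\<in>{1..b}. \<bar>- x i\<bar> \<le> normb b x"
    using abs_le_normb by simp
  have "\<bar>y i\<bar> \<le> normb b x * supersol ?t b i"
    using diff_op_solution_bound[OF p y0 y(2) supersol_nonneg supersol_nonneg w normb_nonneg x i] t
    by blast
  also have "\<dots> \<le> normb b x * (real b ^ 2 * (1 / (1 - l)))"
  proof (rule mult_left_mono[OF _ normb_nonneg])
    have "supersol ?t b i \<le> real b ^ 2 * weight ?t b 1"
      using supersol_le[of b ?t i] t by simp
    also have "\<dots> \<le> real b ^ 2 * (1 / (1 - l))"
      by (rule mult_left_mono[OF weight_sstar_le[OF assms(1-3)]]) simp
    finally show "supersol ?t b i \<le> real b ^ 2 * (1 / (1 - l))" .
  qed
  finally show ?thesis
    using invJT_eq[OF assms(1,2) _ y] assms(3) by simp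
qed

lemma hessform_eq:
  assumes i: "i \<in> {1..b}" and x0: "x 0 = 0"
  shows "hessform l b x i = 2 * l * ((x (i - 1))\<^sup>2 - (x i)\<^sup>2)"
proof -
  have diag: "(\<Sum>k = 1..b. x j * hess l i j k * x k) = x j * hess l i j j * x j"
    if "j \<in> {1..b}" for j
  proof -
    have "(\<Sum>k = 1..b. x j * hess l i j k * x k)
        = (\<Sum>k = 1..b. if k = j then x j * hess l i j j * x j else 0)"
      by (rule sum.cong) (auto simp: hess_def)
    then show ?thesis using that by simp
  qed
  have "hessform l b x i = (\<Sum>j = 1..b. x j * hess l i j j * x j)"
    unfolding hessform_def using i diag by simp
  also have "\<dots> = (\<Sum>j = 1..b. (if j = i then - 2 * l * (x j)\<^sup>2 else 0)
                              + (if j = i - 1 then 2 * l * (x j)\<^sup>2 else 0))"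
    by (rule sum.cong) (use i in \<open>auto simp: hess_def power2_eq_square\<close>)
  also have "\<dots> = 2 * l * ((x (i - 1))\<^sup>2 - (x i)\<^sup>2)"
    using i x0 by (cases "i = 1") (auto simp: sum.distrib algebra_simps)
  finally show ?thesis .
qed

lemma sum_abs_hessform_le:
  assumes "0 \<le> l" "l \<le> 1" "x 0 = 0"
  shows "(\<Sum>i = 1..b. \<bar>hessform l b x i\<bar>) \<le> 4 * (normb b x)\<^sup>2"
proof -
  have pointwise: "\<bar>hessform l b x i\<bar> \<le> 2 * ((x (i - 1))\<^sup>2 + (x i)\<^sup>2)"
    if "i \<in> {1..b}" for i
  proof -
    have "\<bar>hessform l b x i\<bar> = 2 * l * \<bar>(x (i - 1))\<^sup>2 - (x i)\<^sup>2\<bar>"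
      using hessform_eq[OF that, of x l] assms(1,3) by (simp add: abs_mult)
    also have "\<dots> \<le> 2 * 1 * ((x (i - 1))\<^sup>2 + (x i)\<^sup>2)"
      using assms(1,2) by (intro mult_mono) (auto simp: abs_le_iff)
    finally show ?thesis by simp
  qed
  have shift: "(\<Sum>i = 1..b. (x (i - 1))\<^sup>2) \<le> (\<Sum>i = 1..b. (x i)\<^sup>2)"
  proof -
    have "(\<Sum>i = 1..b. (x (i - 1))\<^sup>2) = (\<Sum>i = 0..b - 1. (x i)\<^sup>2)"
      using assms(3) by (cases b) (simp_all add: sum.shift_bounds_cl_Suc_ivl del: sum.cl_ivl_Suc)
    also have "\<dots> \<le> (\<Sum>i = 0..b. (x i)\<^sup>2)" by (intro sum_mono2) auto
    also have "\<dots> = (\<Sum>i = 1..b. (x i)\<^sup>2)" using assms(3) by (simp add: sum.atLeast_Suc_atMost)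
    finally show ?thesis .
  qed
  have "(\<Sum>i = 1..b. \<bar>hessform l b x i\<bar>) \<le> (\<Sum>i = 1..b. 2 * ((x (i - 1))\<^sup>2 + (x i)\<^sup>2))"
    using pointwise by (rule sum_mono)
  also have "\<dots> = 2 * (\<Sum>i = 1..b. (x (i - 1))\<^sup>2) + 2 * (\<Sum>i = 1..b. (x i)\<^sup>2)"
    by (simp add: sum.distrib sum_distrib_left)
  also have "\<dots> \<le> 4 * (\<Sum>i = 1..b. (x i)\<^sup>2)" using shift by simp
  also have "\<dots> = 4 * (normb b x)\<^sup>2"
    unfolding normb_def by (simp add: sum_nonneg)
  finally show ?thesis .
qed

lemma abs_dotb_invJT_hessform_le:
  assumes "1 \<le> b" "0 < l" "l < 1" "d 0 = 0"
  shows "\<bar>dotb b (invJT l b d) (hessform l b d)\<bar> \<le> 4 * normb b d ^ 3 * real b ^ 2 / (1 - l)"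
proof -
  define M where "M = normb b d * real b ^ 2 / (1 - l)"
  have "\<bar>dotb b (invJT l b d) (hessform l b d)\<bar> \<le> (\<Sum>i = 1..b. \<bar>invJT l b d i\<bar> * \<bar>hessform l b d i\<bar>)"
    unfolding dotb_def by (rule order_trans[OF sum_abs]) (simp add: abs_mult)
  also have "\<dots> \<le> (\<Sum>i = 1..b. M * \<bar>hessform l b d i\<bar>)"
    using invJT_abs_le[OF assms(1-3)] unfolding M_def by (intro sum_mono mult_right_mono) auto
  also have "\<dots> = M * (\<Sum>i = 1..b. \<bar>hessform l b d i\<bar>)" by (simp add: sum_distrib_left)
  also have "\<dots> \<le> M * (4 * (normb b d)\<^sup>2)"
    using sum_abs_hessform_le assms normb_nonneg unfolding M_def by (intro mult_left_mono) auto
  also have "\<dots> = 4 * normb b d ^ 3 * real b ^ 2 / (1 - l)"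
    unfolding M_def by (simp add: power2_eq_square power3_eq_cube)
  finally show ?thesis .
qed

lemma bigo_ln_imp_square_le_powr:
  fixes f :: "nat \<Rightarrow> real"
  assumes "f \<in> O(\<lambda>N. ln (real N))" "0 < e"
  shows "eventually (\<lambda>N. (f N)\<^sup>2 \<le> real N powr e) at_top"
proof -
  obtain c where c: "c > 0" "eventually (\<lambda>N. norm (f N) \<le> c * norm (ln (real N))) at_top"
    using assms(1) by (elim landau_o.bigE)
  have "eventually (\<lambda>x::real. (c * ln x)\<^sup>2 \<le> x powr e) at_top"
    using c(1) assms(2) by real_asymp
  then have "eventually (\<lambda>N. (c * ln (real N))\<^sup>2 \<le> real N powr e) at_top"
    using filterlim_real_sequentially eventually_compose_filterlim by blast
  with c(2) eventually_ge_at_top[of 1] show ?thesis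
  proof eventually_elim
    case (elim N)
    then have "\<bar>f N\<bar> \<le> \<bar>c * ln (real N)\<bar>" using c(1) by (simp add: abs_mult)
    then have "(f N)\<^sup>2 \<le> (c * ln (real N))\<^sup>2" by (simp add: abs_le_square_iff)
    then show ?case using elim by linarith
  qed
qed

lemma lam_bounds:
  assumes "0 < \<gamma>" "\<gamma> \<le> 1" "0 < \<alpha>" "1 < real N"
  shows "0 < lam \<gamma> \<alpha> N" "lam \<gamma> \<alpha> N < 1" "1 - lam \<gamma> \<alpha> N = \<gamma> / real N powr \<alpha>"
proof -
  have "1 < real N powr \<alpha>" using assms(3,4) by simp
  then have "0 < \<gamma> / real N powr \<alpha>" "\<gamma> / real N powr \<alpha> < 1"
    using assms(1,2,4) by (auto simp: divide_less_eq intro!: divide_pos_pos)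
  then show "0 < lam \<gamma> \<alpha> N" "lam \<gamma> \<alpha> N < 1" "1 - lam \<gamma> \<alpha> N = \<gamma> / real N powr \<alpha>"
    unfolding lam_def by simp_all
qed

lemma power_le_powr_imp_le_powr:
  fixes X a e :: real
  assumes "0 \<le> X" "0 < n" "0 < a" "X ^ n \<le> a powr e"
  shows "X \<le> a powr (e / n)"
proof (cases "X = 0")
  case False
  then have "X = (X ^ n) powr (1 / n)"
    using assms(1,2) by (simp add: powr_realpow[symmetric] powr_powr)
  also have "\<dots> \<le> (a powr e) powr (1 / n)"
    using assms False by (intro powr_mono2) auto
  also have "\<dots> = a powr (e / n)" by (simp add: powr_powr)
  finally show ?thesis .
qed simp

lemma abs_dotb_invJT_hessform_le_powr:
  fixes \<gamma> \<alpha> \<epsilon> \<xi> :: real and r B N :: nat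
  assumes "0 < \<gamma>" "\<gamma> \<le> 1" "0 < \<alpha>" "1 \<le> r" "1 \<le> B" "1 < real N"
    and B: "(real B)\<^sup>2 \<le> real N powr (\<alpha> + 3 * \<xi>)"
    and d: "d 0 = 0" "normb B d ^ (2 * r) \<le> real N powr (- \<epsilon>)"
  shows "\<bar>dotb B (invJT (lam \<gamma> \<alpha> N) B d) (hessform (lam \<gamma> \<alpha> N) B d)\<bar>
           \<le> 4 / \<gamma> / real N powr (3 * \<epsilon> / (2 * real r) - 2 * \<alpha> - 3 * \<xi>)"
proof -
  define l where "l = lam \<gamma> \<alpha> N"
  note l_bounds = lam_bounds[OF assms(1-3,6), folded l_def]
  have X: "normb B d \<le> real N powr (- \<epsilon> / (2 * r))"
    using power_le_powr_imp_le_powr[OF normb_nonneg _ _ d(2)] assms(4,6) by simp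
  have "\<bar>dotb B (invJT l B d) (hessform l B d)\<bar> \<le> 4 * normb B d ^ 3 * (real B)\<^sup>2 / (1 - l)"
    using abs_dotb_invJT_hessform_le[of B l d] assms(5) l_bounds(1,2) d(1) by blast
  also have "\<dots> \<le> 4 * (real N powr (- \<epsilon> / (2 * r))) ^ 3 * real N powr (\<alpha> + 3 * \<xi>) / (1 - l)"
    using X B normb_nonneg l_bounds
    by (intro divide_right_mono mult_mono mult_left_mono power_mono) auto
  also have "\<dots> = 4 / \<gamma> * real N powr (- (3 * \<epsilon> / (2 * real r) - 2 * \<alpha> - 3 * \<xi>))"
    unfolding l_bounds(3) using assms(6) by (simp add: powr_power powr_add[symmetric] field_simps)
  also have "\<dots> = 4 / \<gamma> / real N powr (3 * \<epsilon> / (2 * real r) - 2 * \<alpha> - 3 * \<xi>)"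
    unfolding powr_minus_divide by simp
  finally show ?thesis unfolding l_def .
qed

theorem lemma9:
  fixes \<gamma> \<alpha> \<epsilon> \<xi> :: real and r :: nat and b :: "nat \<Rightarrow> nat"
  assumes "0 < \<gamma>" "\<gamma> \<le> 1" "0 < \<alpha>" "\<alpha> < 1/4" "1 \<le> r" "0 < \<epsilon>" "0 < \<xi>"
    and "\<forall>N. 1 \<le> b N"
    and "(\<lambda>N. real (b N)) \<in> O(\<lambda>N. ln (real N))"
  shows "\<exists>C>0. \<exists>N0::nat. \<forall>N\<ge>N0. \<forall>s \<in> Sset (b N).
     let l = lam \<gamma> \<alpha> N; d = (\<lambda>k. s k - sstar l (b N) k) in
       normb (b N) d ^ (2 * r) \<le> real N powr (- \<epsilon>) \<longrightarrow>
       \<bar>dotb (b N) (invJT l (b N) d) (hessform l (b N) d)\<bar>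
         \<le> C / real N powr (3 * \<epsilon> / (2 * real r) - 2 * \<alpha> - 3 * \<xi>)"
proof -
  obtain N1 where N1: "\<And>N. N \<ge> N1 \<Longrightarrow> (real (b N))\<^sup>2 \<le> real N powr (\<alpha> + 3 * \<xi>)"
    using bigo_ln_imp_square_le_powr[OF assms(9), of "\<alpha> + 3 * \<xi>"] assms(3,7)
    unfolding eventually_at_top_linorder by auto
  have "\<bar>dotb (b N) (invJT l (b N) d) (hessform l (b N) d)\<bar>
          \<le> 4 / \<gamma> / real N powr (3 * \<epsilon> / (2 * real r) - 2 * \<alpha> - 3 * \<xi>)"
    if N: "max N1 2 \<le> N" and s: "s \<in> Sset (b N)" and l: "l = lam \<gamma> \<alpha> N"
      and d: "d = (\<lambda>k. s k - sstar l (b N) k)"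
      and small: "normb (b N) d ^ (2 * r) \<le> real N powr (- \<epsilon>)"
    for N s l d
  proof -
    have N': "1 < real N" using N by simp
    have "sstar l (b N) \<in> Sset (b N)"
      using sstar_bounds(1) lam_bounds[OF assms(1-3) N'] assms(8) l by simp
    then have "d 0 = 0" using Sset_outside[OF s, of 0] Sset_outside[of _ "b N" 0] d by simp
    then show ?thesis
      using abs_dotb_invJT_hessform_le_powr[OF assms(1-3,5) _ N' N1 _ small] assms(8) N l by simp
  qed
  then show ?thesis
    using assms(1) unfolding Let_def by (intro exI[of _ "4 / \<gamma>"] conjI exI[of _ "max N1 2"]) auto
qed

end
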